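(* Let $(V,L,\varphi,E)$ be a valuation system. Then $\varphi$ is $\Pi$-extendible if and only if for every $b\in L$ and every $\varphi$-convergent sequence $a_1\ge a_2\ge\cdots$ in $L$, $$\textstyle\bigwedge_n a_n\le b \quad\Longrightarrow\quad \bigwedge_n\varphi(a_n)\le\varphi(b).$$
   Context: A valuation system $(V,L,\varphi,E)$ consists of: (i) a lattice $V$ which is $\sigma$-distributive, i.e. for every $a\in V$ and every sequence $(b_n)$ in $V$ whose infimum exists, $\bigwedge_n(a\vee b_n)$ exists and equals $a\vee\bigwedge_n b_n$, and dually for suprema; (ii) a sublattice $L$ of $V$; (iii) a partially ordered abelian group $E$ which is R-complete: whenever $x_1\ge x_2\ge\cdots$ and $y_1\ge y_2\ge\cdots$ in $E$ are such that $\bigwedge_n(x_n+y_n)$ exists, then $\bigwedge_n x_n$ and $\bigwedge_n y_n$ exist, and dually for increasing sequences and suprema; (iv) a valuation $\varphi:L\to E$, i.e. an order-preserving map with $\varphi(a\wedge b)+\varphi(a\vee b)=\varphi(a)+\varphi(b)$. A decreasing sequence $a_1\ge a_2\ge\cdots$ in $L$ is $\varphi$-convergent if $\bigwedge_n a_n$ exists in $V$ and $\bigwedge_n\varphi(a_n)$ exists in $E$. Let $\Pi L:=\{\bigwedge_n a_n: (a_n)\text{ a }\varphi\text{-convergent decreasing sequence in }L\}$ (a sublattice of $V$). $\varphi$ is $\Pi$-extendible if there is a valuation $\Pi\varphi:\Pi L\to E$ with $\Pi\varphi(\bigwedge_n a_n)=\bigwedge_n\varphi(a_n)$ for every $\varphi$-convergent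 decreasing sequence $(a_n)$ in $L$. *)

theory Defs
  imports Main
begin

definition is_glb :: "'a::order set \<Rightarrow> 'a \<Rightarrow> bool" where
  "is_glb S x \<longleftrightarrow> (\<forall>s\<in>S. x \<le> s) \<and> (\<forall>y. (\<forall>s\<in>S. y \<le> s) \<longrightarrow> y \<le> x)"

definition is_lub :: "'a::order set \<Rightarrow> 'a \<Rightarrow> bool" where
  "is_lub S x \<longleftrightarrow> (\<forall>s\<in>S. s \<le> x) \<and> (\<forall>y. (\<forall>s\<in>S. s \<le> y) \<longrightarrow> x \<le> y)"

text \<open>The infimum of a sequence, meaningful when it exists.\<close>
definition seq_inf :: "(nat \<Rightarrow> 'a::order) \<Rightarrow> 'a" where
  "seq_inf a = (THE x. is_glb (range a) x)"

text \<open>sigma-distributivity of the lattice V (taken to be the whole type 'v).\<close>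
definition sigma_distributive :: "'v::lattice itself \<Rightarrow> bool" where
  "sigma_distributive (t::'v itself) \<longleftrightarrow>
     (\<forall>(a::'v) (b::nat \<Rightarrow> 'v) (x::'v). is_glb (range b) x \<longrightarrow> is_glb (range (\<lambda>n. sup a (b n))) (sup a x)) \<and>
     (\<forall>(a::'v) (b::nat \<Rightarrow> 'v) (x::'v). is_lub (range b) x \<longrightarrow> is_lub (range (\<lambda>n. inf a (b n))) (inf a x))"

text \<open>R-completeness of the partially ordered abelian group E (taken to be the whole type 'e).\<close>
definition R_complete :: "'e::ordered_ab_group_add itself \<Rightarrow> bool" where
  "R_complete (t::'e itself) \<longleftrightarrow>
     (\<forall>x y :: nat \<Rightarrow> 'e. antimono x \<longrightarrow> antimono y \<longrightarrow>
        (\<exists>z. is_glb (range (\<lambda>n. x n + y n)) z) \<longrightarrow>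
        (\<exists>u. is_glb (range x) u) \<and> (\<exists>v. is_glb (range y) v)) \<and>
     (\<forall>x y :: nat \<Rightarrow> 'e. mono x \<longrightarrow> mono y \<longrightarrow>
        (\<exists>z. is_lub (range (\<lambda>n. x n + y n)) z) \<longrightarrow>
        (\<exists>u. is_lub (range x) u) \<and> (\<exists>v. is_lub (range y) v))"

definition sublattice :: "'v::lattice set \<Rightarrow> bool" where
  "sublattice L \<longleftrightarrow> (\<forall>a\<in>L. \<forall>b\<in>L. inf a b \<in> L \<and> sup a b \<in> L)"

definition valuation_on :: "'v::lattice set \<Rightarrow> ('v \<Rightarrow> 'e::ordered_ab_group_add) \<Rightarrow> bool" where
  "valuation_on S \<phi> \<longleftrightarrow>
     (\<forall>a\<in>S. \<forall>b\<in>S. a \<le> b \<longrightarrow> \<phi> a \<le> \<phi> b) \<and>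
     (\<forall>a\<in>S. \<forall>b\<in>S. \<phi> (inf a b) + \<phi> (sup a b) = \<phi> a + \<phi> b)"

definition phi_convergent ::
  "'v::lattice set \<Rightarrow> ('v \<Rightarrow> 'e::ordered_ab_group_add) \<Rightarrow> (nat \<Rightarrow> 'v) \<Rightarrow> bool" where
  "phi_convergent L \<phi> a \<longleftrightarrow>
     (\<forall>n. a n \<in> L) \<and> antimono a \<and>
     (\<exists>x. is_glb (range a) x) \<and> (\<exists>y. is_glb (range (\<lambda>n. \<phi> (a n))) y)"

definition Pi_set :: "'v::lattice set \<Rightarrow> ('v \<Rightarrow> 'e::ordered_ab_group_add) \<Rightarrow> 'v set" where
  "Pi_set L \<phi> = {seq_inf a | a. phi_convergent L \<phi> a}"

definition Pi_extendible :: "'v::lattice set \<Rightarrow> ('v \<Rightarrow> 'e::ordered_ab_group_add) \<Rightarrow> bool" where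
  "Pi_extendible L \<phi> \<longleftrightarrow>
     (\<exists>\<psi>. valuation_on (Pi_set L \<phi>) \<psi> \<and>
          (\<forall>a. phi_convergent L \<phi> a \<longrightarrow> \<psi> (seq_inf a) = seq_inf (\<lambda>n. \<phi> (a n))))"

end

theory Submission
  imports Defs
begin

text \<open>If the condition holds, two \<phi>-convergent sequences with comparable infima have comparable
  limits of valuations, so \<open>\<Pi>\<phi> x := \<And>\<^sub>n \<phi>(a\<^sub>n)\<close> is well defined and monotone on \<open>\<Pi>L\<close>.
  Modularity passes to \<open>\<Pi>L\<close>: for \<phi>-convergent \<open>a\<close>, \<open>a'\<close> the sequences \<open>a\<^sub>n \<sqinter> a'\<^sub>n\<close> and
  \<open>a\<^sub>n \<squnion> a'\<^sub>n\<close> decrease to \<open>x \<sqinter> y\<close> and (by \<sigma>-distributivity) to \<open>x \<squnion> y\<close>; the sums of their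
  valuations equal \<open>\<phi>(a\<^sub>n) + \<phi>(a'\<^sub>n)\<close>, which have an infimum, so R-completeness makes both
  sequences \<phi>-convergent, and infima of decreasing sequences are additive. Conversely,
  constant sequences put \<open>L\<close> inside \<open>\<Pi>L\<close>, and monotonicity of \<open>\<Pi>\<phi>\<close> is the condition.\<close>

lemma is_glb_unique: "is_glb S x \<Longrightarrow> is_glb S y \<Longrightarrow> x = y"
  unfolding is_glb_def by (meson order_antisym)

lemma seq_inf_eqI: "is_glb (range a) x \<Longrightarrow> seq_inf a = x"
  unfolding seq_inf_def using is_glb_unique by blast

lemma is_glb_seq_inf:
  assumes "is_glb (range a) x" shows "is_glb (range a) (seq_inf a)"
  using assms seq_inf_eqI[OF assms] by simp

lemma is_glb_lower: "is_glb S x \<Longrightarrow> s \<in> S \<Longrightarrow> x \<le> s"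
  unfolding is_glb_def by blast

lemma is_glb_greatest: "is_glb S x \<Longrightarrow> (\<And>s. s \<in> S \<Longrightarrow> z \<le> s) \<Longrightarrow> z \<le> x"
  unfolding is_glb_def by blast

lemma is_glb_const: "is_glb (range (\<lambda>n. c)) c"
  unfolding is_glb_def by auto

lemma seq_inf_const: "seq_inf (\<lambda>n. c) = c"
  by (rule seq_inf_eqI) (rule is_glb_const)

lemma is_glb_add:
  fixes u v :: "nat \<Rightarrow> 'e::ordered_ab_group_add"
  assumes "antimono u" "antimono v" "is_glb (range u) p" "is_glb (range v) q"
  shows "is_glb (range (\<lambda>n. u n + v n)) (p + q)"
  unfolding is_glb_def
proof (intro conjI allI impI ballI)
  fix s assume "s \<in> range (\<lambda>n. u n + v n)"
  then obtain n where s: "s = u n + v n" by auto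
  have "p \<le> u n" "q \<le> v n" using assms is_glb_lower by blast+
  then show "p + q \<le> s" using s add_mono by blast
next
  fix z assume z: "\<forall>s\<in>range (\<lambda>n. u n + v n). z \<le> s"
  have "z - p \<le> v m" for m
  proof -
    have "z - v m \<le> u n" for n
    proof -
      have "z \<le> u (max n m) + v (max n m)" using z by auto
      also have "\<dots> \<le> u n + v m"
        using assms(1,2) by (intro add_mono) (auto simp: antimono_def)
      finally show ?thesis by (simp add: le_diff_eq diff_le_eq)
    qed
    then have "z - v m \<le> p" using assms(3) is_glb_greatest by blast
    then show ?thesis by (simp add: le_diff_eq diff_le_eq add.commute)
  qed
  then have "z - p \<le> q" using assms(4) is_glb_greatest by blast
  then show "z \<le> p + q" by (simp add: le_diff_eq diff_le_eq add.commute)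
qed

lemma is_glb_inf:
  fixes a b :: "nat \<Rightarrow> 'v::lattice"
  assumes "is_glb (range a) x" "is_glb (range b) y"
  shows "is_glb (range (\<lambda>n. inf (a n) (b n))) (inf x y)"
  unfolding is_glb_def
proof (intro conjI allI impI ballI)
  fix s assume "s \<in> range (\<lambda>n. inf (a n) (b n))"
  then obtain n where s: "s = inf (a n) (b n)" by auto
  have "x \<le> a n" "y \<le> b n" using assms is_glb_lower by blast+
  then show "inf x y \<le> s" using s by (simp add: le_infI1 le_infI2)
next
  fix z assume z: "\<forall>s\<in>range (\<lambda>n. inf (a n) (b n)). z \<le> s"
  have "z \<le> x" using assms(1) by (rule is_glb_greatest) (use z in auto)
  moreover have "z \<le> y" using assms(2) by (rule is_glb_greatest) (use z in auto)
  ultimately show "z \<le> inf x y" by simp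
qed

lemma is_glb_sup:
  fixes a b :: "nat \<Rightarrow> 'v::lattice"
  assumes sd: "sigma_distributive TYPE('v)" and am: "antimono a" "antimono b"
    and g: "is_glb (range a) x" "is_glb (range b) y"
  shows "is_glb (range (\<lambda>n. sup (a n) (b n))) (sup x y)"
  unfolding is_glb_def
proof (intro conjI allI impI ballI)
  fix s assume "s \<in> range (\<lambda>n. sup (a n) (b n))"
  then obtain n where s: "s = sup (a n) (b n)" by auto
  have "x \<le> a n" "y \<le> b n" using g is_glb_lower by blast+
  then show "sup x y \<le> s" using s by (simp add: le_supI1 le_supI2)
next
  fix z assume z: "\<forall>s\<in>range (\<lambda>n. sup (a n) (b n)). z \<le> s"
  have distrib_a: "is_glb (range (\<lambda>n. sup c (a n))) (sup c x)" for c
    using sd g(1) unfolding sigma_distributive_def by blast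
  have distrib_b: "is_glb (range (\<lambda>n. sup x (b n))) (sup x y)"
    using sd g(2) unfolding sigma_distributive_def by blast
  have "z \<le> sup x (b m)" for m
  proof -
    have "z \<le> sup (b m) (a n)" for n
    proof -
      have "z \<le> sup (a (max n m)) (b (max n m))" using z by auto
      also have "\<dots> \<le> sup (a n) (b m)"
        using am by (intro sup_mono) (auto simp: antimono_def)
      finally show ?thesis by (simp add: sup_commute)
    qed
    then have "z \<le> sup (b m) x" using distrib_a[of "b m"] is_glb_greatest by blast
    then show ?thesis by (simp add: sup_commute)
  qed
  then show "z \<le> sup x y" using distrib_b is_glb_greatest by blast
qed

lemma antimono_inf_seq:
  fixes a b :: "nat \<Rightarrow> 'v::lattice"
  shows "antimono a \<Longrightarrow> antimono b \<Longrightarrow> antimono (\<lambda>n. inf (a n) (b n))"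
  unfolding antimono_def by (blast intro: inf_mono)

lemma antimono_sup_seq:
  fixes a b :: "nat \<Rightarrow> 'v::lattice"
  shows "antimono a \<Longrightarrow> antimono b \<Longrightarrow> antimono (\<lambda>n. sup (a n) (b n))"
  unfolding antimono_def by (blast intro: sup_mono)

lemma phi_convergent_is_glb:
  assumes "phi_convergent L \<phi> a" shows "is_glb (range a) (seq_inf a)"
proof -
  obtain x where "is_glb (range a) x" using assms unfolding phi_convergent_def by blast
  then show ?thesis by (rule is_glb_seq_inf)
qed

lemma phi_convergent_is_glb_valuations:
  assumes "phi_convergent L \<phi> a"
  shows "is_glb (range (\<lambda>n. \<phi> (a n))) (seq_inf (\<lambda>n. \<phi> (a n)))"
proof -
  obtain y where "is_glb (range (\<lambda>n. \<phi> (a n))) y"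
    using assms unfolding phi_convergent_def by blast
  then show ?thesis by (rule is_glb_seq_inf)
qed

lemma phi_convergent_const: "b \<in> L \<Longrightarrow> phi_convergent L \<phi> (\<lambda>n. b)"
  unfolding phi_convergent_def using is_glb_const[of b] is_glb_const[of "\<phi> b"]
  by (auto simp: antimono_def)

lemma seq_inf_in_Pi_set: "phi_convergent L \<phi> a \<Longrightarrow> seq_inf a \<in> Pi_set L \<phi>"
  unfolding Pi_set_def by blast

lemma subset_Pi_set: "L \<subseteq> Pi_set L \<phi>"
proof
  fix b assume "b \<in> L"
  then have "seq_inf (\<lambda>n. b) \<in> Pi_set L \<phi>"
    by (rule seq_inf_in_Pi_set[OF phi_convergent_const])
  then show "b \<in> Pi_set L \<phi>" by (simp add: seq_inf_const)
qed

lemma R_complete_glb: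
  fixes x y :: "nat \<Rightarrow> 'e::ordered_ab_group_add"
  assumes "R_complete TYPE('e)" "antimono x" "antimono y" "is_glb (range (\<lambda>n. x n + y n)) z"
  shows "\<exists>u. is_glb (range x) u" "\<exists>v. is_glb (range y) v"
  using assms unfolding R_complete_def by blast+

lemma antimono_valuation_seq:
  assumes "valuation_on L \<phi>" "antimono a" "\<And>n. a n \<in> L"
  shows "antimono (\<lambda>n. \<phi> (a n))"
  using assms unfolding valuation_on_def by (auto intro!: antimonoI dest: antimonoD)

lemma phi_convergent_inf_sup:
  fixes L :: "'v::lattice set" and \<phi> :: "'v \<Rightarrow> 'e::ordered_ab_group_add"
  assumes sd: "sigma_distributive TYPE('v)" and sub: "sublattice L"
    and rc: "R_complete TYPE('e)" and val: "valuation_on L \<phi>"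
    and a: "phi_convergent L \<phi> a" and b: "phi_convergent L \<phi> b"
  defines "p \<equiv> \<lambda>n. inf (a n) (b n)" and "q \<equiv> \<lambda>n. sup (a n) (b n)"
  shows "phi_convergent L \<phi> p" "phi_convergent L \<phi> q"
    and "seq_inf (\<lambda>n. \<phi> (p n)) + seq_inf (\<lambda>n. \<phi> (q n))
       = seq_inf (\<lambda>n. \<phi> (a n)) + seq_inf (\<lambda>n. \<phi> (b n))"
proof -
  have abL: "a n \<in> L" "b n \<in> L" for n using a b unfolding phi_convergent_def by blast+
  have ab_anti: "antimono a" "antimono b" using a b unfolding phi_convergent_def by blast+
  have pqL: "p n \<in> L" "q n \<in> L" for n
    using sub abL unfolding sublattice_def p_def q_def by blast+
  have pq_anti: "antimono p" "antimono q"
    unfolding p_def q_def using ab_anti antimono_inf_seq antimono_sup_seq by blast+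
  have \<phi>pq_anti: "antimono (\<lambda>n. \<phi> (p n))" "antimono (\<lambda>n. \<phi> (q n))"
    using antimono_valuation_seq[OF val] pq_anti pqL by blast+
  have \<phi>ab_anti: "antimono (\<lambda>n. \<phi> (a n))" "antimono (\<lambda>n. \<phi> (b n))"
    using antimono_valuation_seq[OF val] ab_anti abL by blast+
  have modular: "(\<lambda>n. \<phi> (p n) + \<phi> (q n)) = (\<lambda>n. \<phi> (a n) + \<phi> (b n))"
    using val abL unfolding valuation_on_def p_def q_def by auto
  have sum: "is_glb (range (\<lambda>n. \<phi> (p n) + \<phi> (q n)))
      (seq_inf (\<lambda>n. \<phi> (a n)) + seq_inf (\<lambda>n. \<phi> (b n)))"
    unfolding modular using is_glb_add[OF \<phi>ab_anti phi_convergent_is_glb_valuations[OF a]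
        phi_convergent_is_glb_valuations[OF b]] .
  obtain P Q where P: "is_glb (range (\<lambda>n. \<phi> (p n))) P"
    and Q: "is_glb (range (\<lambda>n. \<phi> (q n))) Q"
    using R_complete_glb[OF rc \<phi>pq_anti sum] by blast
  have "is_glb (range p) (inf (seq_inf a) (seq_inf b))"
    unfolding p_def by (rule is_glb_inf[OF phi_convergent_is_glb[OF a] phi_convergent_is_glb[OF b]])
  then show "phi_convergent L \<phi> p"
    unfolding phi_convergent_def using pqL(1) pq_anti(1) P by blast
  have "is_glb (range q) (sup (seq_inf a) (seq_inf b))"
    unfolding q_def
    by (rule is_glb_sup[OF sd ab_anti phi_convergent_is_glb[OF a] phi_convergent_is_glb[OF b]])
  then show "phi_convergent L \<phi> q"
    unfolding phi_convergent_def using pqL(2) pq_anti(2) Q by blast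
  have "P + Q = seq_inf (\<lambda>n. \<phi> (a n)) + seq_inf (\<lambda>n. \<phi> (b n))"
    using is_glb_add[OF \<phi>pq_anti P Q] sum by (rule is_glb_unique)
  then show "seq_inf (\<lambda>n. \<phi> (p n)) + seq_inf (\<lambda>n. \<phi> (q n))
      = seq_inf (\<lambda>n. \<phi> (a n)) + seq_inf (\<lambda>n. \<phi> (b n))"
    using seq_inf_eqI[OF P] seq_inf_eqI[OF Q] by simp
qed

lemma seq_inf_inf_seq:
  assumes "phi_convergent L \<phi> a" "phi_convergent L \<phi> b"
  shows "seq_inf (\<lambda>n. inf (a n) (b n)) = inf (seq_inf a) (seq_inf b)"
  using assms by (intro seq_inf_eqI is_glb_inf phi_convergent_is_glb)

lemma seq_inf_sup_seq:
  fixes a b :: "nat \<Rightarrow> 'v::lattice"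
  assumes "sigma_distributive TYPE('v)" "phi_convergent L \<phi> a" "phi_convergent L \<phi> b"
  shows "seq_inf (\<lambda>n. sup (a n) (b n)) = sup (seq_inf a) (seq_inf b)"
  using assms by (intro seq_inf_eqI is_glb_sup phi_convergent_is_glb) (auto simp: phi_convergent_def)

definition Pi_valuation :: "'v::lattice set \<Rightarrow> ('v \<Rightarrow> 'e::ordered_ab_group_add) \<Rightarrow> 'v \<Rightarrow> 'e" where
  "Pi_valuation L \<phi> x =
     seq_inf (\<lambda>n. \<phi> ((SOME a. phi_convergent L \<phi> a \<and> seq_inf a = x) n))"

context
  fixes L :: "'v::lattice set" and \<phi> :: "'v \<Rightarrow> 'e::ordered_ab_group_add"
  assumes bounded: "\<And>a b. phi_convergent L \<phi> a \<Longrightarrow> b \<in> L \<Longrightarrow> seq_inf a \<le> b \<Longrightarrow>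
    seq_inf (\<lambda>n. \<phi> (a n)) \<le> \<phi> b"
begin

lemma seq_inf_valuations_mono:
  assumes a: "phi_convergent L \<phi> a" and b: "phi_convergent L \<phi> b"
    and le: "seq_inf a \<le> seq_inf b"
  shows "seq_inf (\<lambda>n. \<phi> (a n)) \<le> seq_inf (\<lambda>n. \<phi> (b n))"
proof (rule is_glb_greatest[OF phi_convergent_is_glb_valuations[OF b]])
  fix s assume "s \<in> range (\<lambda>n. \<phi> (b n))"
  then obtain m where s: "s = \<phi> (b m)" by blast
  have "seq_inf b \<le> b m" by (rule is_glb_lower[OF phi_convergent_is_glb[OF b]]) simp
  with le have "seq_inf a \<le> b m" by (rule order_trans)
  moreover have "b m \<in> L" using b unfolding phi_convergent_def by blast
  ultimately show "seq_inf (\<lambda>n. \<phi> (a n)) \<le> s" unfolding s by (rule bounded[OF a, rotated])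
qed

lemma Pi_valuation_seq_inf:
  assumes a: "phi_convergent L \<phi> a"
  shows "Pi_valuation L \<phi> (seq_inf a) = seq_inf (\<lambda>n. \<phi> (a n))"
proof -
  let ?r = "SOME a'. phi_convergent L \<phi> a' \<and> seq_inf a' = seq_inf a"
  have r: "phi_convergent L \<phi> ?r" "seq_inf ?r = seq_inf a"
    using someI[of "\<lambda>a'. phi_convergent L \<phi> a' \<and> seq_inf a' = seq_inf a" a] a by auto
  have "seq_inf (\<lambda>n. \<phi> (?r n)) = seq_inf (\<lambda>n. \<phi> (a n))"
    by (rule order_antisym; rule seq_inf_valuations_mono) (use r a in simp_all)
  then show ?thesis unfolding Pi_valuation_def .
qed

lemma valuation_on_Pi_valuation:
  assumes sd: "sigma_distributive TYPE('v)" and sub: "sublattice L"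
    and rc: "R_complete TYPE('e)" and val: "valuation_on L \<phi>"
  shows "valuation_on (Pi_set L \<phi>) (Pi_valuation L \<phi>)"
  unfolding valuation_on_def
proof (intro conjI ballI impI)
  fix x y assume "x \<in> Pi_set L \<phi>" "y \<in> Pi_set L \<phi>" and "x \<le> y"
  then obtain a b where "phi_convergent L \<phi> a" "phi_convergent L \<phi> b"
    and "seq_inf a \<le> seq_inf b" "x = seq_inf a" "y = seq_inf b"
    unfolding Pi_set_def by blast
  then show "Pi_valuation L \<phi> x \<le> Pi_valuation L \<phi> y"
    using seq_inf_valuations_mono Pi_valuation_seq_inf by simp
next
  fix x y assume "x \<in> Pi_set L \<phi>" "y \<in> Pi_set L \<phi>"
  then obtain a b where a: "phi_convergent L \<phi> a" and b: "phi_convergent L \<phi> b"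
    and xy: "x = seq_inf a" "y = seq_inf b"
    unfolding Pi_set_def by blast
  note pq = phi_convergent_inf_sup[OF sd sub rc val a b]
  show "Pi_valuation L \<phi> (inf x y) + Pi_valuation L \<phi> (sup x y)
      = Pi_valuation L \<phi> x + Pi_valuation L \<phi> y"
    using pq(3) Pi_valuation_seq_inf[OF pq(1)] Pi_valuation_seq_inf[OF pq(2)]
    unfolding xy seq_inf_inf_seq[OF a b, symmetric] seq_inf_sup_seq[OF sd a b, symmetric]
      Pi_valuation_seq_inf[OF a] Pi_valuation_seq_inf[OF b]
    by simp
qed

end

lemma Pi_extendible_imp_bounded:
  assumes ext: "Pi_extendible L \<phi>" and a: "phi_convergent L \<phi> a"
    and b: "b \<in> L" and le: "seq_inf a \<le> b"
  shows "seq_inf (\<lambda>n. \<phi> (a n)) \<le> \<phi> b"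
proof -
  obtain \<psi> where val: "valuation_on (Pi_set L \<phi>) \<psi>"
    and ext_eq: "\<And>a. phi_convergent L \<phi> a \<Longrightarrow> \<psi> (seq_inf a) = seq_inf (\<lambda>n. \<phi> (a n))"
    using ext unfolding Pi_extendible_def by blast
  have "\<psi> (seq_inf a) \<le> \<psi> b"
    using val le b subset_Pi_set seq_inf_in_Pi_set[OF a] unfolding valuation_on_def by blast
  moreover have "\<psi> b = \<phi> b"
    using ext_eq[OF phi_convergent_const[OF b]] by (simp add: seq_inf_const)
  ultimately show ?thesis using ext_eq[OF a] by simp
qed

theorem lemma5p7:
  fixes L :: "'v::lattice set" and \<phi> :: "'v \<Rightarrow> 'e::ordered_ab_group_add"
  assumes "sigma_distributive TYPE('v)"
    and "sublattice L"
    and "R_complete TYPE('e)"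
    and "valuation_on L \<phi>"
  shows "Pi_extendible L \<phi> \<longleftrightarrow>
    (\<forall>b\<in>L. \<forall>a. phi_convergent L \<phi> a \<longrightarrow> seq_inf a \<le> b \<longrightarrow> seq_inf (\<lambda>n. \<phi> (a n)) \<le> \<phi> b)"
proof
  assume "Pi_extendible L \<phi>"
  then show "\<forall>b\<in>L. \<forall>a. phi_convergent L \<phi> a \<longrightarrow> seq_inf a \<le> b \<longrightarrow> seq_inf (\<lambda>n. \<phi> (a n)) \<le> \<phi> b"
    using Pi_extendible_imp_bounded by blast
next
  assume "\<forall>b\<in>L. \<forall>a. phi_convergent L \<phi> a \<longrightarrow> seq_inf a \<le> b \<longrightarrow> seq_inf (\<lambda>n. \<phi> (a n)) \<le> \<phi> b"
  then have bounded: "\<And>a b. phi_convergent L \<phi> a \<Longrightarrow> b \<in> L \<Longrightarrow> seq_inf a \<le> b \<Longrightarrow>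
      seq_inf (\<lambda>n. \<phi> (a n)) \<le> \<phi> b"
    by blast
  show "Pi_extendible L \<phi>"
    unfolding Pi_extendible_def
    by (intro exI[of _ "Pi_valuation L \<phi>"] conjI allI impI
        valuation_on_Pi_valuation[OF bounded assms] Pi_valuation_seq_inf[OF bounded])
qed

end
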